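(* Let $m\ge1$ and let $u$ be an $m$-labeled unranked tree with $|u|=p$ edges. The generating function $\mathbf C^{\mathcal T}_{m,p}(z)=\sum_{n\ge0} c_n z^n$, where $c_n$ is the number of $m$-labeled unranked trees with $n$ edges that contain $u$ as a subtree, is $$\mathbf C^{\mathcal T}_{m,p}(z)=\frac{z^{p+1}+\sqrt{1-4mz+2z^{p+1}+z^{2p+2}}-\sqrt{1-4mz}}{2z}.$$
   Context: An $m$-labeled unranked tree is a non-empty finite rooted tree whose nodes carry labels from $\{1,\dots,m\}$ and in which the children of every node are linearly ordered (any finite number of children). Its size is its number of edges. A tree $t$ contains $u$ as a subtree if for some node $v$ of $t$ the subtree rooted at $v$ (consisting of $v$ and all its descendants) equals $u$. *)

theory Defs
  imports Complex_Main
begin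

datatype utree = Node nat "utree list"

fun labeled :: "nat \<Rightarrow> utree \<Rightarrow> bool" where
  "labeled m (Node a ts) = (a \<in> {1..m} \<and> (\<forall>t\<in>set ts. labeled m t))"

fun edges :: "utree \<Rightarrow> nat" where
  "edges (Node a ts) = length ts + sum_list (map edges ts)"

fun subtrees :: "utree \<Rightarrow> utree set" where
  "subtrees (Node a ts) = insert (Node a ts) (\<Union>t\<in>set ts. subtrees t)"

definition contains_subtree :: "utree \<Rightarrow> utree \<Rightarrow> bool" where
  "contains_subtree t u \<longleftrightarrow> u \<in> subtrees t"

definition count_containing :: "nat \<Rightarrow> utree \<Rightarrow> nat \<Rightarrow> nat" where
  "count_containing m u n = card {t. labeled m t \<and> edges t = n \<and> contains_subtree t u}"

end

theory Submission
  imports Defs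
begin

text \<open>A tree with \<open>n\<close> edges is a root label in \<open>{1..m}\<close> over a forest, and a nonempty forest
  splits into its first tree and the remaining forest. Hence the numbers \<open>t\<^sub>n\<close> of \<open>m\<close>-labeled
  trees satisfy \<open>t\<^sub>0 = m\<close>, \<open>t\<^sub>n\<^sub>+\<^sub>1 = \<Sum>\<^sub>k t\<^sub>k t\<^sub>n\<^sub>-\<^sub>k\<close>, i.e. \<open>T = m + z T\<^sup>2\<close>.
  A tree avoids \<open>u\<close> iff its root forest does and it is not \<open>u\<close> itself; for the avoiding counts
  this gives \<open>A + z\<^sup>p = m + z A (A + z\<^sup>p)\<close>. A crude exponential bound on \<open>t\<^sub>n\<close> makes both
  series converge for \<open>\<bar>z\<bar> < 1 / (16 m)\<close>, where each is the root of its quadratic that is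
  small at \<open>0\<close>; the trees containing \<open>u\<close> are counted by \<open>T - A\<close>.\<close>

definition forest_size :: "utree list \<Rightarrow> nat" where
  "forest_size ts = (\<Sum>t\<leftarrow>ts. Suc (edges t))"

lemma forest_size_simps [simp]:
  "forest_size [] = 0"
  "forest_size (t # ts) = Suc (edges t) + forest_size ts"
  by (simp_all add: forest_size_def)

lemma edges_Node [simp]: "edges (Node a ts) = forest_size ts"
  by (induct ts) (simp_all add: forest_size_def)

declare edges.simps [simp del]

lemma edges_less_forest_size: "t \<in> set ts \<Longrightarrow> edges t < forest_size ts"
  by (induct ts) auto

lemma length_le_forest_size: "length ts \<le> forest_size ts"
  by (induct ts) auto

definition forests :: "utree set \<Rightarrow> nat \<Rightarrow> utree list set" where
  "forests S n = {ts. set ts \<subseteq> S \<and> forest_size ts = n}"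

lemma forests_0: "forests S 0 = {[]}"
  by (auto simp: forests_def forest_size_def)

lemma forests_Suc:
  "forests S (Suc n) =
     (\<Union>k\<le>n. (\<lambda>(t, ts). t # ts) ` ({t \<in> S. edges t = k} \<times> forests S (n - k)))"
proof (intro equalityI subsetI)
  fix xs assume "xs \<in> forests S (Suc n)"
  then show "xs \<in> (\<Union>k\<le>n. (\<lambda>(t, ts). t # ts) ` ({t \<in> S. edges t = k} \<times> forests S (n - k)))"
    by (cases xs) (auto simp: forests_def intro!: bexI[of _ "edges (hd xs)"])
qed (auto simp: forests_def)

lemma finite_forests:
  assumes "\<And>k. k < n \<Longrightarrow> finite {t \<in> S. edges t = k}"
  shows "finite (forests S n)"
proof (rule finite_subset)
  show "forests S n \<subseteq> {ts. set ts \<subseteq> (\<Union>k<n. {t \<in> S. edges t = k}) \<and> length ts \<le> n}"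
    using edges_less_forest_size length_le_forest_size by (fastforce simp: forests_def)
  show "finite {ts. set ts \<subseteq> (\<Union>k<n. {t \<in> S. edges t = k}) \<and> length ts \<le> n}"
    by (rule finite_lists_length_le) (use assms in auto)
qed

lemma card_forests_Suc:
  assumes "\<And>k. finite {t \<in> S. edges t = k}"
  shows "card (forests S (Suc n)) =
           (\<Sum>k\<le>n. card {t \<in> S. edges t = k} * card (forests S (n - k)))"
proof -
  have "inj_on (\<lambda>(t, ts). t # ts) X" for X :: "(utree \<times> utree list) set"
    by (auto simp: inj_on_def)
  then show ?thesis
    unfolding forests_Suc using finite_forests[of _ S] assms
    by (subst card_UN_disjoint) (auto simp: card_image card_cartesian_product)
qed

lemma card_Node_image:
  "card ((\<lambda>(a, ts). Node a ts) ` ({1..m} \<times> F)) = m * card F"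
proof -
  have "inj_on (\<lambda>(a, ts). Node a ts) X" for X by (auto simp: inj_on_def)
  then show ?thesis by (simp add: card_image card_cartesian_product)
qed

definition labeled_trees :: "nat \<Rightarrow> nat \<Rightarrow> utree set" where
  "labeled_trees m n = {t. labeled m t \<and> edges t = n}"

lemma labeled_trees_eq_Node_image:
  "labeled_trees m n = (\<lambda>(a, ts). Node a ts) ` ({1..m} \<times> forests {t. labeled m t} n)"
proof (intro equalityI subsetI)
  fix t assume "t \<in> labeled_trees m n"
  then show "t \<in> (\<lambda>(a, ts). Node a ts) ` ({1..m} \<times> forests {t. labeled m t} n)"
    by (cases t) (auto simp: labeled_trees_def forests_def intro!: image_eqI)
qed (auto simp: labeled_trees_def forests_def)

lemma finite_labeled_trees: "finite (labeled_trees m n)"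
proof (induct n rule: less_induct)
  case (less n)
  then have "finite (forests {t. labeled m t} n)"
    by (intro finite_forests) (simp add: labeled_trees_def)
  then show ?case
    unfolding labeled_trees_eq_Node_image by simp
qed

lemma card_labeled_trees: "card (labeled_trees m n) = m * card (forests {t. labeled m t} n)"
  unfolding labeled_trees_eq_Node_image by (rule card_Node_image)

lemma card_labeled_trees_0: "card (labeled_trees m 0) = m"
  by (simp add: card_labeled_trees forests_0)

lemma card_labeled_trees_Suc:
  "card (labeled_trees m (Suc n)) =
     (\<Sum>k\<le>n. card (labeled_trees m k) * card (labeled_trees m (n - k)))"
proof -
  have slice: "{t \<in> {t. labeled m t}. edges t = k} = labeled_trees m k" for k
    by (auto simp: labeled_trees_def)
  have fin: "finite {t \<in> {t. labeled m t}. edges t = k}" for k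
    unfolding slice by (rule finite_labeled_trees)
  have "card (labeled_trees m (Suc n)) =
          m * (\<Sum>k\<le>n. card (labeled_trees m k) * card (forests {t. labeled m t} (n - k)))"
    unfolding card_labeled_trees[of m "Suc n"] card_forests_Suc[OF fin] slice ..
  then show ?thesis
    by (simp add: card_labeled_trees sum_distrib_left mult.left_commute)
qed

definition avoiding_trees :: "nat \<Rightarrow> utree \<Rightarrow> nat \<Rightarrow> utree set" where
  "avoiding_trees m u n = {t \<in> labeled_trees m n. \<not> contains_subtree t u}"

lemma contains_subtree_Node:
  "contains_subtree (Node a ts) u \<longleftrightarrow> Node a ts = u \<or> (\<exists>t\<in>set ts. contains_subtree t u)"
  by (auto simp: contains_subtree_def)

lemma edges_le_of_subtree: "s \<in> subtrees t \<Longrightarrow> edges s \<le> edges t"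
proof (induct t rule: subtrees.induct)
  case (1 a ts)
  then show ?case
    using edges_less_forest_size[of _ ts] by auto (meson le_trans less_imp_le)
qed

lemma child_not_contains_parent: "t \<in> set ts \<Longrightarrow> \<not> contains_subtree t (Node a ts)"
  using edges_less_forest_size[of t ts] edges_le_of_subtree[of "Node a ts" t]
  by (auto simp: contains_subtree_def)

lemma avoiding_trees_eq_Node_image:
  "avoiding_trees m u n =
     (\<lambda>(a, ts). Node a ts) ` ({1..m} \<times> forests {t. labeled m t \<and> \<not> contains_subtree t u} n) - {u}"
proof (intro equalityI subsetI)
  fix t assume "t \<in> avoiding_trees m u n"
  then show "t \<in> (\<lambda>(a, ts). Node a ts) `
                  ({1..m} \<times> forests {t. labeled m t \<and> \<not> contains_subtree t u} n) - {u}"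
    by (cases t) (auto simp: avoiding_trees_def labeled_trees_def forests_def contains_subtree_Node
        intro!: image_eqI)
qed (auto simp: avoiding_trees_def labeled_trees_def forests_def contains_subtree_Node)

lemma finite_avoiding_trees: "finite (avoiding_trees m u n)"
  using finite_labeled_trees by (simp add: avoiding_trees_def)

lemma card_avoiding_trees:
  assumes "labeled m u"
  shows "card (avoiding_trees m u n) + of_bool (n = edges u) =
           m * card (forests {t. labeled m t \<and> \<not> contains_subtree t u} n)"
proof -
  let ?F = "forests {t. labeled m t \<and> \<not> contains_subtree t u} n"
  let ?X = "(\<lambda>(a, ts). Node a ts) ` ({1..m} \<times> ?F)"
  have "finite ?F"
    using finite_avoiding_trees
    by (intro finite_forests) (simp add: avoiding_trees_def labeled_trees_def conj_ac)
  then have "finite ?X" by simp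
  moreover have "u \<in> ?X \<longleftrightarrow> n = edges u"
  proof
    obtain b us where u: "u = Node b us" by (cases u)
    assume "n = edges u"
    then have "(b, us) \<in> {1..m} \<times> ?F"
      using assms child_not_contains_parent[of _ us b] by (auto simp: u forests_def)
    then show "u \<in> ?X" unfolding u by force
  qed (auto simp: forests_def)
  ultimately have "card (?X - {u}) + of_bool (n = edges u) = card ?X"
    using card_Suc_Diff1[of ?X u] by (cases "n = edges u") simp_all
  then show ?thesis
    unfolding avoiding_trees_eq_Node_image card_Node_image .
qed

lemma card_avoiding_trees_0:
  assumes "labeled m u"
  shows "card (avoiding_trees m u 0) + of_bool (edges u = 0) = m"
  using card_avoiding_trees[OF assms, of 0] by (auto simp: forests_0)

lemma card_avoiding_trees_Suc:
  assumes "labeled m u"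
  shows "card (avoiding_trees m u (Suc n)) + of_bool (Suc n = edges u) =
           (\<Sum>k\<le>n. card (avoiding_trees m u k) *
              (card (avoiding_trees m u (n - k)) + of_bool (n - k = edges u)))"
proof -
  let ?V = "{t. labeled m t \<and> \<not> contains_subtree t u}"
  have slice: "{t \<in> ?V. edges t = k} = avoiding_trees m u k" for k
    by (auto simp: avoiding_trees_def labeled_trees_def)
  have fin: "finite {t \<in> ?V. edges t = k}" for k
    unfolding slice by (rule finite_avoiding_trees)
  have "card (avoiding_trees m u (Suc n)) + of_bool (Suc n = edges u) =
          m * card (forests ?V (Suc n))"
    by (rule card_avoiding_trees[OF assms])
  also have "\<dots> = (\<Sum>k\<le>n. card (avoiding_trees m u k) * (m * card (forests ?V (n - k))))"
    unfolding card_forests_Suc[OF fin] slice by (simp add: sum_distrib_left mult.left_commute)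
  also have "\<dots> = (\<Sum>k\<le>n. card (avoiding_trees m u k) *
                   (card (avoiding_trees m u (n - k)) + of_bool (n - k = edges u)))"
    unfolding card_avoiding_trees[OF assms] ..
  finally show ?thesis .
qed

lemma sum_convolution_le_square:
  fixes f :: "nat \<Rightarrow> real"
  assumes "\<And>n. f n \<ge> 0"
  shows "(\<Sum>n\<le>N. \<Sum>k\<le>n. f k * f (n - k)) \<le> (\<Sum>n\<le>N. f n)\<^sup>2"
proof -
  have "(\<Sum>n\<le>N. \<Sum>k\<le>n. f k * f (n - k)) = (\<Sum>(i, j)\<in>{(i, j). i + j \<le> N}. f i * f j)"
    by (rule sum.triangle_reindex_eq[symmetric])
  also have "\<dots> \<le> (\<Sum>(i, j)\<in>{..N} \<times> {..N}. f i * f j)"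
    by (rule sum_mono2) (auto intro: mult_nonneg_nonneg assms)
  also have "\<dots> = (\<Sum>n\<le>N. f n)\<^sup>2"
    by (simp add: power2_eq_square sum_product sum.cartesian_product)
  finally show ?thesis .
qed

text \<open>The partial sums of \<open>t n x\<^sup>n\<close> at \<open>x = 1 / (8 m)\<close> stay below \<open>2 m\<close>, because
  \<open>s \<le> 2 m\<close> implies \<open>m + x s\<^sup>2 \<le> 2 m\<close>.\<close>
lemma convolution_recurrence_bound:
  fixes t :: "nat \<Rightarrow> real" and m :: real
  assumes "m > 0" and t0: "t 0 = m" and t_Suc: "\<And>n. t (Suc n) = (\<Sum>k\<le>n. t k * t (n - k))"
    and nonneg: "\<And>n. t n \<ge> 0"
  shows "t n \<le> 2 * m * (8 * m) ^ n"
proof -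
  define x :: real where "x = 1 / (8 * m)"
  define f where "f j = t j * x ^ j" for j
  have "x > 0" using \<open>m > 0\<close> by (simp add: x_def)
  then have f_nonneg: "f j \<ge> 0" for j by (simp add: f_def nonneg)
  have partial_sums: "(\<Sum>n\<le>N. f n) \<le> 2 * m" for N
  proof (induct N)
    case 0
    then show ?case using \<open>m > 0\<close> by (simp add: f_def t0)
  next
    case (Suc N)
    have f_Suc: "f (Suc n) = x * (\<Sum>k\<le>n. f k * f (n - k))" for n
      unfolding f_def t_Suc sum_distrib_left sum_distrib_right
      by (rule sum.cong) (auto simp: power_add[symmetric] algebra_simps)
    have "(\<Sum>n\<le>Suc N. f n) = f 0 + (\<Sum>n\<le>N. f (Suc n))"
      by (rule sum.atMost_Suc_shift)
    also have "\<dots> = m + x * (\<Sum>n\<le>N. \<Sum>k\<le>n. f k * f (n - k))"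
      unfolding f_Suc by (simp add: sum_distrib_left f_def t0)
    also have "\<dots> \<le> m + x * (\<Sum>n\<le>N. f n)\<^sup>2"
      using sum_convolution_le_square[of f N] f_nonneg \<open>x > 0\<close> by simp
    also have "\<dots> \<le> m + x * (2 * m)\<^sup>2"
      using Suc \<open>x > 0\<close> f_nonneg
      by (intro add_left_mono mult_left_mono power_mono) (auto intro: sum_nonneg)
    also have "\<dots> = 2 * m - m / 2"
      using \<open>m > 0\<close> by (simp add: x_def power2_eq_square)
    finally show ?case using \<open>m > 0\<close> by simp
  qed
  have "t n * x ^ n \<le> 2 * m"
    using member_le_sum[of n "{..n}" f] f_nonneg partial_sums[of n] by (simp add: f_def)
  then show ?thesis
    using \<open>x > 0\<close> \<open>m > 0\<close> by (simp add: x_def field_simps)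
qed

lemma power_series_exponential_growth:
  fixes a :: "nat \<Rightarrow> real" and m z :: real
  assumes "m > 0" and growth: "\<And>n. \<bar>a n\<bar> \<le> 2 * m * (8 * m) ^ n" and "16 * m * \<bar>z\<bar> < 1"
  shows "summable (\<lambda>n. norm (a n * z ^ n))" and "\<bar>\<Sum>n. a n * z ^ n\<bar> \<le> 4 * m"
proof -
  define q where "q = 8 * m * \<bar>z\<bar>"
  have q: "0 \<le> q" "q < 1 / 2"
    using assms by (auto simp: q_def)
  have geometric: "(\<lambda>n. 2 * m * q ^ n) sums (2 * m / (1 - q))"
    using sums_mult[OF geometric_sums[of q], of "2 * m"] q by simp
  have majorant: "norm (a n * z ^ n) \<le> 2 * m * q ^ n" for n
  proof -
    have "norm (a n * z ^ n) \<le> 2 * m * (8 * m) ^ n * \<bar>z\<bar> ^ n"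
      using growth[of n] by (simp add: abs_mult power_abs mult_right_mono)
    then show ?thesis by (simp add: q_def power_mult_distrib)
  qed
  show summable: "summable (\<lambda>n. norm (a n * z ^ n))"
    by (rule summable_comparison_test[OF _ sums_summable[OF geometric]]) (use majorant in auto)
  have "\<bar>\<Sum>n. a n * z ^ n\<bar> \<le> (\<Sum>n. norm (a n * z ^ n))"
    using summable_norm[OF summable] by simp
  also have "\<dots> \<le> 2 * m / (1 - q)"
    using suminf_le[OF majorant summable sums_summable[OF geometric]] geometric
    by (simp add: sums_iff)
  also have "\<dots> \<le> 4 * m"
    using q \<open>m > 0\<close> by (simp add: field_simps)
  finally show "\<bar>\<Sum>n. a n * z ^ n\<bar> \<le> 4 * m" .
qed

lemma Cauchy_product_shift_sums:
  fixes a b :: "nat \<Rightarrow> real"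
  assumes "summable (\<lambda>n. norm (a n * z ^ n))" and "summable (\<lambda>n. norm (b n * z ^ n))"
  shows "(\<lambda>n. (\<Sum>k\<le>n. a k * b (n - k)) * z ^ Suc n) sums
           (z * ((\<Sum>n. a n * z ^ n) * (\<Sum>n. b n * z ^ n)))"
proof -
  have "(\<Sum>k\<le>n. (a k * z ^ k) * (b (n - k) * z ^ (n - k))) = (\<Sum>k\<le>n. a k * b (n - k)) * z ^ n"
    for n
    unfolding sum_distrib_right by (rule sum.cong) (auto simp: power_add[symmetric] algebra_simps)
  then have "(\<lambda>n. (\<Sum>k\<le>n. a k * b (n - k)) * z ^ n) sums ((\<Sum>n. a n * z ^ n) * (\<Sum>n. b n * z ^ n))"
    using Cauchy_product_sums[OF assms] by simp
  from sums_mult[OF this, of z] show ?thesis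
    by (simp add: algebra_simps)
qed

text \<open>With \<open>b n = a n + c [n = p]\<close> the recurrence reads \<open>b (n + 1) = \<Sum>k\<le>n. a k b (n - k)\<close>,
  i.e. \<open>B = m + z A B\<close> for the generating functions \<open>A\<close> and \<open>B = A + c z\<^sup>p\<close>.\<close>
lemma generating_function_equation:
  fixes a :: "nat \<Rightarrow> real" and m c z :: real
  assumes summable: "summable (\<lambda>n. norm (a n * z ^ n))"
    and a_0: "a 0 + (if p = 0 then c else 0) = m"
    and a_Suc: "\<And>n. a (Suc n) + (if Suc n = p then c else 0) =
                      (\<Sum>k\<le>n. a k * (a (n - k) + (if n - k = p then c else 0)))"
  defines "S \<equiv> \<Sum>n. a n * z ^ n"
  shows "S + c * z ^ p = m + z * S * (S + c * z ^ p)"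
proof -
  define b where "b n = a n + (if n = p then c else 0)" for n
  have "(\<lambda>n. (if n = p then c else 0) * z ^ n) = (\<lambda>n. if n = p then c * z ^ n else 0)"
    by auto
  then have single: "(\<lambda>n. (if n = p then c else 0) * z ^ n) sums (c * z ^ p)"
    using sums_single[of p "\<lambda>n. c * z ^ n"] by simp
  have "(\<lambda>n. b n * z ^ n) sums (S + c * z ^ p)"
    unfolding b_def distrib_right S_def
    by (intro sums_add single summable_sums summable_norm_cancel[OF summable])
  moreover have "(\<lambda>n. b n * z ^ n) sums (m + z * S * (S + c * z ^ p))"
  proof -
    have "summable (\<lambda>n. norm ((if n = p then c else 0) * z ^ n))"
      by (rule summable_finite[of "{p}"]) auto
    then have "summable (\<lambda>n. norm (a n * z ^ n) + norm ((if n = p then c else 0) * z ^ n))"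
      by (rule summable_add[OF summable])
    then have "summable (\<lambda>n. norm (b n * z ^ n))"
      by (rule summable_comparison_test') (auto simp: b_def distrib_right norm_triangle_ineq)
    from Cauchy_product_shift_sums[OF summable this]
    have "(\<lambda>n. b (Suc n) * z ^ Suc n) sums (z * S * (S + c * z ^ p))"
      using \<open>(\<lambda>n. b n * z ^ n) sums (S + c * z ^ p)\<close>
      by (simp add: b_def a_Suc S_def sums_iff mult.assoc)
    then show ?thesis
      using a_0 by (subst (asm) sums_Suc_iff) (simp add: b_def add.commute)
  qed
  ultimately show ?thesis
    by (rule sums_unique2)
qed

lemma quadratic_small_root:
  fixes y b c :: real
  assumes "y\<^sup>2 - b * y + c = 0" and "\<bar>y\<bar> < 1 / 4" and "b \<ge> 3 / 4"
  shows "y = (b - sqrt (b\<^sup>2 - 4 * c)) / 2"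
proof -
  have "b\<^sup>2 - 4 * c = (b - 2 * y)\<^sup>2"
    using assms(1) by (simp add: power2_eq_square algebra_simps)
  then have "sqrt (b\<^sup>2 - 4 * c) = b - 2 * y"
    using assms(2,3) by simp
  then show ?thesis by simp
qed

lemma closed_form_of_tree_recurrence:
  fixes a :: "nat \<Rightarrow> real" and m c z :: real
  assumes "m \<ge> 1" and "\<bar>c\<bar> \<le> 1" and growth: "\<And>n. \<bar>a n\<bar> \<le> 2 * m * (8 * m) ^ n"
    and a_0: "a 0 + (if p = 0 then c else 0) = m"
    and a_Suc: "\<And>n. a (Suc n) + (if Suc n = p then c else 0) =
                      (\<Sum>k\<le>n. a k * (a (n - k) + (if n - k = p then c else 0)))"
    and "z \<noteq> 0" and small: "16 * m * \<bar>z\<bar> < 1"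
  shows "(\<lambda>n. a n * z ^ n) sums
           ((1 - c * z ^ (p + 1) - sqrt ((1 - c * z ^ (p + 1))\<^sup>2 - 4 * (m * z - c * z ^ (p + 1))))
              / (2 * z))"
proof -
  define S where "S = (\<Sum>n. a n * z ^ n)"
  define w where "w = z ^ (p + 1)"
  have "m > 0" using \<open>m \<ge> 1\<close> by simp
  note series = power_series_exponential_growth[OF \<open>m > 0\<close> growth small]
  have "\<bar>z * S\<bar> \<le> \<bar>z\<bar> * (4 * m)"
    using series(2) by (simp add: S_def abs_mult mult_left_mono)
  also have "\<dots> = (16 * m * \<bar>z\<bar>) / 4"
    by simp
  finally have y_small: "\<bar>z * S\<bar> < 1 / 4"
    using small by simp
  have "\<bar>z\<bar> < 1 / 16"
    using small \<open>m \<ge> 1\<close> mult_right_mono[OF \<open>m \<ge> 1\<close>, of "\<bar>z\<bar>"] by simp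
  moreover have "\<bar>w\<bar> \<le> \<bar>z\<bar>"
    using power_le_one[of "\<bar>z\<bar>" p] \<open>\<bar>z\<bar> < 1 / 16\<close>
    by (simp add: w_def abs_mult power_abs mult_left_le)
  moreover have "\<bar>c * w\<bar> \<le> \<bar>w\<bar>"
    using \<open>\<bar>c\<bar> \<le> 1\<close> by (simp add: abs_mult mult_left_le_one_le)
  ultimately have "1 - c * w \<ge> 3 / 4"
    by (auto dest: abs_le_D2)
  moreover have "(z * S)\<^sup>2 - (1 - c * w) * (z * S) + (m * z - c * w) = 0"
  proof -
    have "S + c * z ^ p = m + z * S * (S + c * z ^ p)"
      unfolding S_def by (rule generating_function_equation[OF series(1) a_0 a_Suc])
    then have "z * (S + c * z ^ p) = z * (m + z * S * (S + c * z ^ p))" by simp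
    then show ?thesis
      by (simp add: w_def power2_eq_square algebra_simps)
  qed
  ultimately have "z * S = (1 - c * w - sqrt ((1 - c * w)\<^sup>2 - 4 * (m * z - c * w))) / 2"
    using quadratic_small_root y_small by blast
  then have "S = (1 - c * w - sqrt ((1 - c * w)\<^sup>2 - 4 * (m * z - c * w))) / (2 * z)"
    using \<open>z \<noteq> 0\<close> by (simp add: field_simps)
  then show ?thesis
    using summable_sums[OF summable_norm_cancel[OF series(1)]] by (simp add: S_def w_def)
qed

lemma card_labeled_trees_growth:
  assumes "m \<ge> 1"
  shows "real (card (labeled_trees m n)) \<le> 2 * real m * (8 * real m) ^ n"
  using assms by (intro convolution_recurrence_bound)
    (simp_all add: card_labeled_trees_0 card_labeled_trees_Suc)

lemma avoiding_trees_subset: "avoiding_trees m u n \<subseteq> labeled_trees m n"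
  by (auto simp: avoiding_trees_def)

lemma count_containing_eq:
  "real (count_containing m u n) = real (card (labeled_trees m n)) - real (card (avoiding_trees m u n))"
proof -
  have "{t. labeled m t \<and> edges t = n \<and> contains_subtree t u} = labeled_trees m n - avoiding_trees m u n"
    by (auto simp: labeled_trees_def avoiding_trees_def)
  then show ?thesis
    using card_Diff_subset[OF finite_avoiding_trees avoiding_trees_subset]
      card_mono[OF finite_labeled_trees avoiding_trees_subset]
    by (simp add: count_containing_def of_nat_diff)
qed

lemma labeled_trees_generating_function:
  assumes "m \<ge> 1" and "z \<noteq> 0" and "16 * real m * \<bar>z\<bar> < 1"
  shows "(\<lambda>n. real (card (labeled_trees m n)) * z ^ n) sums ((1 - sqrt (1 - 4 * real m * z)) / (2 * z))"
  using closed_form_of_tree_recurrence[of "real m" 0 "\<lambda>n. real (card (labeled_trees m n))" 0 z]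
    assms card_labeled_trees_growth[OF assms(1)]
  by (simp add: card_labeled_trees_0 card_labeled_trees_Suc mult.assoc)

lemma avoiding_trees_generating_function:
  assumes "m \<ge> 1" and "labeled m u" and "edges u = p" and "z \<noteq> 0" and "16 * real m * \<bar>z\<bar> < 1"
  shows "(\<lambda>n. real (card (avoiding_trees m u n)) * z ^ n) sums
           ((1 - z ^ (p + 1) - sqrt (1 - 4 * real m * z + 2 * z ^ (p + 1) + z ^ (2 * p + 2))) / (2 * z))"
proof -
  define a where "a n = real (card (avoiding_trees m u n))" for n
  have a_0: "a 0 + (if p = 0 then 1 else 0) = real m"
    using arg_cong[OF card_avoiding_trees_0[OF assms(2)], of real] assms(3)
    by (simp add: a_def flip: of_bool_def)
  have a_Suc: "a (Suc n) + (if Suc n = p then 1 else 0) =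
                 (\<Sum>k\<le>n. a k * (a (n - k) + (if n - k = p then 1 else 0)))" for n
    using arg_cong[OF card_avoiding_trees_Suc[OF assms(2), of n], of real] assms(3)
    by (simp add: a_def flip: of_bool_def)
  have a_growth: "\<bar>a n\<bar> \<le> 2 * real m * (8 * real m) ^ n" for n
    using card_mono[OF finite_labeled_trees avoiding_trees_subset, of m u n]
      card_labeled_trees_growth[OF assms(1), of n]
    by (simp add: a_def)
  have discriminant: "(1 - z ^ (p + 1))\<^sup>2 - 4 * (real m * z - z ^ (p + 1)) =
                        1 - 4 * real m * z + 2 * z ^ (p + 1) + z ^ (2 * p + 2)"
    by (simp add: power2_eq_square mult_2_right algebra_simps flip: power_add)
  have "(\<lambda>n. a n * z ^ n) sums
          ((1 - z ^ (p + 1) - sqrt ((1 - z ^ (p + 1))\<^sup>2 - 4 * (real m * z - z ^ (p + 1)))) / (2 * z))"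
    using closed_form_of_tree_recurrence[of "real m" 1 a p z] assms a_growth a_0 a_Suc by simp
  then show ?thesis
    unfolding discriminant a_def .
qed

theorem lemma10:
  fixes m p :: nat and u :: utree
  assumes "m \<ge> 1" and "labeled m u" and "edges u = p"
  shows "\<exists>r>0. \<forall>z::real. 0 < \<bar>z\<bar> \<and> \<bar>z\<bar> < r \<longrightarrow>
           (\<lambda>n. real (count_containing m u n) * z ^ n) sums
             ((z ^ (p + 1) + sqrt (1 - 4 * real m * z + 2 * z ^ (p + 1) + z ^ (2 * p + 2))
               - sqrt (1 - 4 * real m * z)) / (2 * z))"
proof (intro exI[of _ "1 / (16 * real m)"] conjI allI impI)
  show "0 < 1 / (16 * real m)"
    using assms(1) by simp
next
  fix z :: real
  assume "0 < \<bar>z\<bar> \<and> \<bar>z\<bar> < 1 / (16 * real m)"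
  then have "z \<noteq> 0" and small: "16 * real m * \<bar>z\<bar> < 1"
    using assms(1) by (auto simp: field_simps)
  let ?D = "1 - 4 * real m * z + 2 * z ^ (p + 1) + z ^ (2 * p + 2)"
  have "(\<lambda>n. real (card (labeled_trees m n)) * z ^ n - real (card (avoiding_trees m u n)) * z ^ n)
          sums ((1 - sqrt (1 - 4 * real m * z)) / (2 * z) - (1 - z ^ (p + 1) - sqrt ?D) / (2 * z))"
    by (intro sums_diff labeled_trees_generating_function avoiding_trees_generating_function
        assms \<open>z \<noteq> 0\<close> small)
  moreover have "(1 - sqrt (1 - 4 * real m * z)) / (2 * z) - (1 - z ^ (p + 1) - sqrt ?D) / (2 * z) =
                   (z ^ (p + 1) + sqrt ?D - sqrt (1 - 4 * real m * z)) / (2 * z)"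
    by (simp add: diff_divide_distrib[symmetric])
  ultimately show "(\<lambda>n. real (count_containing m u n) * z ^ n) sums
                     ((z ^ (p + 1) + sqrt ?D - sqrt (1 - 4 * real m * z)) / (2 * z))"
    by (simp add: count_containing_eq left_diff_distrib)
qed

end
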